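(* Let $\Sigma\subseteq\mathcal A^{\mathbf N}$ be a one-sided subshift over a finite alphabet $\mathcal A$ and let $F\subseteq\Sigma$ be a finite set with dense orbit. Then for every $n$, the number $e_l(n)$ of words of length $n$ of the language of $\Sigma$ that are not left-prolongable satisfies $e_l(n)\le|F|$.
   Context: $\Sigma$ is closed and invariant under the shift $S$. $F$ has dense orbit if $\bigcup_{\omega\in F}\{S^m\omega:m\ge0\}$ is dense in $\Sigma$. The language $\mathcal L$ of $\Sigma$ is the set of finite words occurring as subwords of elements of $\Sigma$. A word $v\in\mathcal L$ is left-prolongable if $av\in\mathcal L$ for some $a\in\mathcal A$. *)

theory Defs
  imports "HOL-Analysis.Analysis"
begin

definition seq_top :: "(nat \<Rightarrow> 'a) topology" where
  "seq_top = product_topology (\<lambda>_. discrete_topology (UNIV :: 'a set)) (UNIV :: nat set)"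

definition shift :: "(nat \<Rightarrow> 'a) \<Rightarrow> (nat \<Rightarrow> 'a)" where
  "shift \<omega> = (\<lambda>k. \<omega> (Suc k))"

definition subshift :: "(nat \<Rightarrow> 'a) set \<Rightarrow> bool" where
  "subshift \<Sigma> \<longleftrightarrow> closedin seq_top \<Sigma> \<and> shift ` \<Sigma> \<subseteq> \<Sigma>"

definition has_dense_orbit :: "(nat \<Rightarrow> 'a) set \<Rightarrow> (nat \<Rightarrow> 'a) set \<Rightarrow> bool" where
  "has_dense_orbit \<Sigma> F \<longleftrightarrow>
     \<Sigma> \<subseteq> seq_top closure_of (\<Union>\<omega>\<in>F. {(shift ^^ m) \<omega> | m. True})"

definition language :: "(nat \<Rightarrow> 'a) set \<Rightarrow> 'a list set" where
  "language \<Sigma> = {w. \<exists>\<omega>\<in>\<Sigma>. \<exists>i. w = map \<omega> [i..<i + length w]}"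

definition left_prolongable :: "(nat \<Rightarrow> 'a) set \<Rightarrow> 'a list \<Rightarrow> bool" where
  "left_prolongable \<Sigma> v \<longleftrightarrow> (\<exists>a. a # v \<in> language \<Sigma>)"

definition e_l :: "(nat \<Rightarrow> 'a) set \<Rightarrow> nat \<Rightarrow> nat" where
  "e_l \<Sigma> n = card {w \<in> language \<Sigma>. length w = n \<and> \<not> left_prolongable \<Sigma> w}"

end

theory Submission
  imports Defs
begin

text \<open>By density, every word of the language occurs in the orbit of some \<open>\<omega> \<in> F\<close>, i.e. as
  \<open>\<omega>(m) \<dots> \<omega>(m + n - 1)\<close>. If \<open>m > 0\<close> the letter \<open>\<omega>(m - 1)\<close> prolongs it to the left, so a
  non-left-prolongable word of length \<open>n\<close> is the prefix of length \<open>n\<close> of some \<open>\<omega> \<in> F\<close>.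
  There are at most \<open>|F|\<close> such prefixes.\<close>

lemma funpow_shift_apply: "(shift ^^ m) \<omega> k = \<omega> (m + k)"
  by (induction m arbitrary: k) (auto simp: shift_def)

lemma subshift_funpow_shift_mem: "subshift \<Sigma> \<Longrightarrow> \<omega> \<in> \<Sigma> \<Longrightarrow> (shift ^^ m) \<omega> \<in> \<Sigma>"
  by (induction m) (auto simp: subshift_def)

lemma openin_seq_top_coordinate: "openin seq_top {x. x k = c}"
proof -
  have "continuous_map seq_top (discrete_topology UNIV) (\<lambda>x. x k)"
    unfolding seq_top_def by (rule continuous_map_product_projection) auto
  then have "openin seq_top {x \<in> topspace seq_top. x k \<in> {c}}"
    by (rule openin_continuous_map_preimage) simp
  then show ?thesis
    by (simp add: seq_top_def)
qed

lemma openin_seq_top_cylinder: "openin seq_top {x. \<forall>k<n. x k = w ! k}"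
proof -
  have "{x. \<forall>k<n. x k = w ! k} = topspace seq_top \<inter> (\<Inter>k\<in>{..<n}. {x. x k = w ! k})"
    by (auto simp: seq_top_def)
  moreover have "openin seq_top (topspace seq_top \<inter> (\<Inter>k\<in>{..<n}. {x. x k = w ! k}))"
    by (cases "n = 0") (auto intro!: openin_Int openin_INT openin_seq_top_coordinate)
  ultimately show ?thesis
    by simp
qed

lemma word_at_in_language: "\<omega> \<in> \<Sigma> \<Longrightarrow> map \<omega> [i..<i + n] \<in> language \<Sigma>"
  unfolding language_def by auto

lemma left_prolongable_word_at:
  assumes "\<omega> \<in> \<Sigma>"
  shows "left_prolongable \<Sigma> (map \<omega> [Suc i..<Suc i + n])"
proof -
  have "\<omega> i # map \<omega> [Suc i..<Suc i + n] = map \<omega> [i..<i + Suc n]"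
    by (simp add: upt_rec)
  then show ?thesis
    using word_at_in_language[OF assms] by (metis left_prolongable_def)
qed

lemma language_occurs_in_dense_orbit:
  assumes "subshift \<Sigma>" and "has_dense_orbit \<Sigma> F" and "w \<in> language \<Sigma>"
  obtains \<omega> m where "\<omega> \<in> F" and "w = map \<omega> [m..<m + length w]"
proof -
  define n where "n = length w" \<comment> \<open>an equation \<open>w = \<dots> length w \<dots>\<close> would make the simplifier loop\<close>
  let ?C = "{x. \<forall>k<n. x k = w ! k}"
  let ?O = "\<Union>\<omega>\<in>F. {(shift ^^ m) \<omega> | m. True}"
  obtain \<sigma> i where "\<sigma> \<in> \<Sigma>" and "w = map \<sigma> [i..<i + length w]"
    using assms(3) unfolding language_def by blast
  then have w: "w = map \<sigma> [i..<i + n]"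
    unfolding n_def by blast
  from \<open>\<sigma> \<in> \<Sigma>\<close> have "(shift ^^ i) \<sigma> \<in> seq_top closure_of ?O"
    using assms(1,2) subshift_funpow_shift_mem unfolding has_dense_orbit_def by blast
  moreover have "(shift ^^ i) \<sigma> \<in> ?C"
    using w by (simp add: funpow_shift_apply)
  ultimately have "\<exists>y. y \<in> ?O \<and> y \<in> ?C"
    using openin_seq_top_cylinder[of n w] unfolding in_closure_of by meson
  then obtain \<omega> m where "\<omega> \<in> F" and occ: "\<forall>k<n. \<omega> (m + k) = w ! k"
    by (auto simp: funpow_shift_apply)
  have "w = map \<omega> [m..<m + length w]"
    by (rule nth_equalityI) (simp_all add: occ n_def)
  with \<open>\<omega> \<in> F\<close> show ?thesis
    by (rule that)
qed

lemma not_left_prolongable_is_prefix: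
  assumes "subshift \<Sigma>" and "F \<subseteq> \<Sigma>" and "has_dense_orbit \<Sigma> F"
    and "w \<in> language \<Sigma>" and "\<not> left_prolongable \<Sigma> w"
  shows "w \<in> (\<lambda>\<omega>. map \<omega> [0..<length w]) ` F"
proof -
  obtain \<omega> m where "\<omega> \<in> F" and w: "w = map \<omega> [m..<m + length w]"
    using language_occurs_in_dense_orbit assms(1,3,4) by blast
  have "m = 0"
  proof (rule ccontr)
    assume "m \<noteq> 0"
    then obtain i where "m = Suc i"
      using not0_implies_Suc by blast
    moreover have "\<omega> \<in> \<Sigma>"
      using assms(2) \<open>\<omega> \<in> F\<close> by blast
    ultimately have "left_prolongable \<Sigma> (map \<omega> [m..<m + length w])"
      using left_prolongable_word_at by blast
    with assms(5) w show False
      by argo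
  qed
  have "w = map \<omega> [0..<length w]"
    using w unfolding \<open>m = 0\<close> add_0 .
  with \<open>\<omega> \<in> F\<close> show ?thesis
    by (intro image_eqI)
qed

theorem lemma2p15:
  fixes \<Sigma> F :: "(nat \<Rightarrow> 'a::finite) set"
  assumes "subshift \<Sigma>"
    and "F \<subseteq> \<Sigma>" and "finite F"
    and "has_dense_orbit \<Sigma> F"
  shows "e_l \<Sigma> n \<le> card F"
proof -
  let ?W = "{w \<in> language \<Sigma>. length w = n \<and> \<not> left_prolongable \<Sigma> w}"
  have "?W \<subseteq> (\<lambda>\<omega>. map \<omega> [0..<n]) ` F"
    using not_left_prolongable_is_prefix[OF assms(1,2,4)] by blast
  then have "card ?W \<le> card ((\<lambda>\<omega>. map \<omega> [0..<n]) ` F)"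
    using assms(3) by (intro card_mono) auto
  also have "\<dots> \<le> card F"
    using assms(3) by (rule card_image_le)
  finally show ?thesis
    by (simp add: e_l_def)
qed

end
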